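(* Let $T\ge1$ be an integer, $\tau\in(0,1)$, $\beta\in(0,1)$, and let $R_f>0$ be a risk-free gross rate. Let $R_1,\dots,R_T$ be independent real random variables (gross risky returns). An investor with wealth $W_t>0$ chooses at each $t=0,\dots,T-1$ a risky share $\alpha_t\in[0,1]$, and wealth evolves as $W_{t+1}=W_t\big(\alpha_tR_{t+1}+(1-\alpha_t)R_f\big)$. Define the value recursively by $v^*_\tau(W_T)=W_T$ and, for $t=T-1,\dots,0$, $$v^*_\tau(W_t)=\max_{\alpha_t\in[0,1]}Q_\tau\big[\beta\,v^*_\tau(W_{t+1})\,\big|\,W_t\big].$$ Let $m_k=\max(Q_\tau[R_k],R_f)$. Then for every $t=0,\dots,T-1$, $$v^*_\tau(W_t)=\beta^{T-t}\,W_t\prod_{k=t+1}^{T}m_k,$$ and the optimal allocation is $\alpha^*_t=1$ if $Q_\tau[R_{t+1}]>R_f$, $\alpha^*_t=0$ if $Q_\tau[R_{t+1}]<R_f$, and any $\alpha_t\in[0,1]$ is optimal if $Q_\tau[R_{t+1}]=R_f$.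
   Context: For a real random variable $Z$ with CDF $F_Z$, $Q_\tau[Z]=\inf\{x\in\mathbb{R}: F_Z(x)\ge\tau\}$, and $Q_\tau[\,\cdot\mid W_t]$ denotes the $\tau$-quantile of the conditional law given current wealth $W_t$. *)

theory Defs
  imports "HOL-Probability.Probability"
begin

definition quantile :: "'a measure \<Rightarrow> real \<Rightarrow> ('a \<Rightarrow> real) \<Rightarrow> real" where
  "quantile M \<tau> Z = Inf {x. cdf (distr M borel Z) x \<ge> \<tau>}"

text \<open>Value with n periods remaining (current time T - n), as a function of current wealth w.
  The conditional quantile given W_t = w is the quantile of the law of
  beta * v(w * (a * R_(t+1) + (1 - a) * Rf)), since R_(t+1) is independent of the past.\<close>
primrec vstar_aux ::
  "'a measure \<Rightarrow> (nat \<Rightarrow> 'a \<Rightarrow> real) \<Rightarrow> real \<Rightarrow> real \<Rightarrow> real \<Rightarrow> nat \<Rightarrow> nat \<Rightarrow> real \<Rightarrow> real" where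
  "vstar_aux M R Rf \<beta> \<tau> T 0 w = w"
| "vstar_aux M R Rf \<beta> \<tau> T (Suc n) w =
     (SUP a\<in>{0..1}. quantile M \<tau>
        (\<lambda>\<omega>. \<beta> * vstar_aux M R Rf \<beta> \<tau> T n (w * (a * R (T - n) \<omega> + (1 - a) * Rf))))"

definition vstar ::
  "'a measure \<Rightarrow> (nat \<Rightarrow> 'a \<Rightarrow> real) \<Rightarrow> real \<Rightarrow> real \<Rightarrow> real \<Rightarrow> nat \<Rightarrow> nat \<Rightarrow> real \<Rightarrow> real" where
  "vstar M R Rf \<beta> \<tau> T t w = vstar_aux M R Rf \<beta> \<tau> T (T - t) w"

definition stage_obj ::
  "'a measure \<Rightarrow> (nat \<Rightarrow> 'a \<Rightarrow> real) \<Rightarrow> real \<Rightarrow> real \<Rightarrow> real \<Rightarrow> nat \<Rightarrow> nat \<Rightarrow> real \<Rightarrow> real \<Rightarrow> real" where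
  "stage_obj M R Rf \<beta> \<tau> T t w a =
     quantile M \<tau> (\<lambda>\<omega>. \<beta> * vstar M R Rf \<beta> \<tau> T (Suc t) (w * (a * R (Suc t) \<omega> + (1 - a) * Rf)))"

end

theory Submission
  imports Defs
begin

(* Backward induction: with n periods left the value is linear in positive wealth,
   v_n(x) = c_n x.  Returns are positive almost surely, so the stage objective is the
   tau-quantile of c_n w (a R + (1 - a) Rf); quantiles commute with nonnegative affine maps,
   hence the objective is c_n w (a Q_tau[R] + (1 - a) Rf), which is linear in a and maximal
   over [0,1] exactly at the stated allocations, with value c_n w max (Q_tau[R], Rf).
   Replacing v_n(W) by c_n W inside the quantile is legitimate only because the two agree
   almost surely and both are measurable; measurability of v_n comes from its monotonicity. *)

lemma (in real_distribution) Inf_cdf_le_iff: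
  assumes "0 < \<tau>" "\<tau> < 1"
  shows "Inf {x. \<tau> \<le> cdf M x} \<le> x \<longleftrightarrow> \<tau> \<le> cdf M x"
proof -
  have "right_continuous_mono (cdf M) 0 1"
    by unfold_locales
      (auto intro: cdf_nondecreasing cdf_is_right_cont cdf_lim_at_top_prob cdf_lim_at_bot monoI)
  then show ?thesis
    using right_continuous_mono.pseudoinverse assms by blast
qed

context prob_space
begin

lemma quantile_le_iff:
  assumes Z: "Z \<in> borel_measurable M" and "0 < \<tau>" "\<tau> < 1"
  shows "quantile M \<tau> Z \<le> x \<longleftrightarrow> \<tau> \<le> prob {\<omega>\<in>space M. Z \<omega> \<le> x}"
proof -
  have "cdf (distr M borel Z) x = prob {\<omega>\<in>space M. Z \<omega> \<le> x}"
    using Z by (simp add: cdf_def measure_distr vimage_def Int_def conj_commute)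
  then show ?thesis
    using real_distribution.Inf_cdf_le_iff[of "distr M borel Z"] assms
    by (simp add: quantile_def)
qed

lemma quantile_eqI:
  assumes "Z \<in> borel_measurable M" "0 < \<tau>" "\<tau> < 1"
    and "\<And>x. q \<le> x \<longleftrightarrow> \<tau> \<le> prob {\<omega>\<in>space M. Z \<omega> \<le> x}"
  shows "quantile M \<tau> Z = q"
  using quantile_le_iff[OF assms(1-3)] assms(4) by (metis order.antisym order.refl)

lemma quantile_const:
  assumes "0 < \<tau>" "\<tau> < 1"
  shows "quantile M \<tau> (\<lambda>_. d) = d"
proof (rule quantile_eqI)
  show "d \<le> x \<longleftrightarrow> \<tau> \<le> prob {\<omega>\<in>space M. d \<le> x}" for x
    using assms by (cases "d \<le> x") (auto simp: prob_space)
qed (use assms in auto)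

lemma quantile_affine:
  assumes Z: "Z \<in> borel_measurable M" and \<tau>: "0 < \<tau>" "\<tau> < 1" and c: "0 \<le> c"
  shows "quantile M \<tau> (\<lambda>\<omega>. c * Z \<omega> + d) = c * quantile M \<tau> Z + d"
proof (cases "c = 0")
  case True
  then show ?thesis
    using quantile_const[OF \<tau>] by simp
next
  case False
  with c have c: "0 < c" by simp
  show ?thesis
  proof (rule quantile_eqI)
    fix x
    have "{\<omega>\<in>space M. c * Z \<omega> + d \<le> x} = {\<omega>\<in>space M. Z \<omega> \<le> (x - d) / c}"
      using c by (auto simp: field_simps)
    moreover have "c * quantile M \<tau> Z + d \<le> x \<longleftrightarrow> quantile M \<tau> Z \<le> (x - d) / c"
      using c by (auto simp: field_simps)
    ultimately show "c * quantile M \<tau> Z + d \<le> x \<longleftrightarrow> \<tau> \<le> prob {\<omega>\<in>space M. c * Z \<omega> + d \<le> x}"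
      using quantile_le_iff[OF Z \<tau>] by simp
  qed (use Z \<tau> in auto)
qed

lemma quantile_mono_AE:
  assumes Z: "Z \<in> borel_measurable M" and Z': "Z' \<in> borel_measurable M"
    and \<tau>: "0 < \<tau>" "\<tau> < 1" and le: "AE \<omega> in M. Z \<omega> \<le> Z' \<omega>"
  shows "quantile M \<tau> Z \<le> quantile M \<tau> Z'"
proof -
  have "prob {\<omega>\<in>space M. Z' \<omega> \<le> x} \<le> prob {\<omega>\<in>space M. Z \<omega> \<le> x}" for x
    by (rule finite_measure_mono_AE) (use le Z in \<open>auto elim!: AE_mp\<close>)
  then show ?thesis
    using quantile_le_iff[OF Z \<tau>] quantile_le_iff[OF Z' \<tau>] by (meson order.refl order.trans)
qed

lemma quantile_cong_AE:
  assumes "Z \<in> borel_measurable M" "Z' \<in> borel_measurable M" "0 < \<tau>" "\<tau> < 1"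
    and "AE \<omega> in M. Z \<omega> = Z' \<omega>"
  shows "quantile M \<tau> Z = quantile M \<tau> Z'"
  using assms(5) by (intro order.antisym quantile_mono_AE assms(1-4)) (auto elim: AE_mp)

end

lemma SUP_convex_combination:
  fixes K q r :: real
  assumes "0 \<le> K"
  shows "(SUP a\<in>{0..1}. K * (a * q + (1 - a) * r)) = K * max q r"
proof (rule cSup_eq_maximum)
  show "K * max q r \<in> (\<lambda>a. K * (a * q + (1 - a) * r)) ` {0..1}"
    by (cases "q \<le> r") (auto intro: image_eqI[where x=0] image_eqI[where x=1] simp: max_def)
next
  fix y assume "y \<in> (\<lambda>a. K * (a * q + (1 - a) * r)) ` {0..1}"
  then obtain a where a: "a \<in> {0..1}" and y: "y = K * (a * q + (1 - a) * r)"
    by auto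
  have "a * q + (1 - a) * r \<le> a * max q r + (1 - a) * max q r"
    using a by (intro add_mono mult_left_mono) auto
  also have "\<dots> = max q r"
    by (simp add: algebra_simps)
  finally show "y \<le> K * max q r"
    using y assms by (simp add: mult_left_mono)
qed

lemma convex_combination_eq_max_iff:
  fixes a q r :: real
  assumes "a \<in> {0..1}"
  shows "a * q + (1 - a) * r = max q r \<longleftrightarrow> (q > r \<longrightarrow> a = 1) \<and> (q < r \<longrightarrow> a = 0)"
proof -
  have to_q: "a * q + (1 - a) * r - q = (1 - a) * (r - q)"
    and to_r: "a * q + (1 - a) * r - r = a * (q - r)"
    by (simp_all add: algebra_simps)
  consider "r < q" | "q < r" | "q = r"
    by linarith
  then show ?thesis
  proof cases
    case 1
    then have "a * q + (1 - a) * r = q \<longleftrightarrow> a = 1"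
      using to_q by auto
    with 1 show ?thesis
      by (simp add: max_def)
  next
    case 2
    then have "a * q + (1 - a) * r = r \<longleftrightarrow> a = 0"
      using to_r by auto
    with 2 show ?thesis
      by (simp add: max_def)
  qed (simp add: algebra_simps)
qed

locale quantile_portfolio = prob_space M
  for M :: "'a measure" and R :: "nat \<Rightarrow> 'a \<Rightarrow> real" and Rf \<beta> \<tau> :: real and T :: nat +
  assumes tau_bounds: "0 < \<tau>" "\<tau> < 1"
    and beta_pos: "0 < \<beta>"
    and Rf_pos: "0 < Rf"
    and R_measurable: "\<And>k. k \<in> {1..T} \<Longrightarrow> R k \<in> borel_measurable M"
    and R_pos_AE: "\<And>k. k \<in> {1..T} \<Longrightarrow> AE \<omega> in M. 0 < R k \<omega>"
begin

abbreviation portfolio_return :: "real \<Rightarrow> nat \<Rightarrow> 'a \<Rightarrow> real" where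
  "portfolio_return a k \<omega> \<equiv> a * R k \<omega> + (1 - a) * Rf"

abbreviation growth :: "nat \<Rightarrow> real" where
  "growth k \<equiv> max (quantile M \<tau> (R k)) Rf"

abbreviation value_fn :: "nat \<Rightarrow> real \<Rightarrow> real" where
  "value_fn \<equiv> vstar_aux M R Rf \<beta> \<tau> T"

definition value_factor :: "nat \<Rightarrow> real" where
  "value_factor n = \<beta> ^ n * (\<Prod>k\<in>{T - n + 1..T}. growth k)"

lemma value_factor_pos: "0 < value_factor n"
  unfolding value_factor_def using beta_pos Rf_pos by (intro mult_pos_pos prod_pos) auto

lemma value_factor_Suc:
  assumes "n < T"
  shows "value_factor (Suc n) = \<beta> * growth (T - n) * value_factor n"
proof -
  have "{T - Suc n + 1..T} = insert (T - n) {T - n + 1..T}"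
    using assms by auto
  then show ?thesis
    by (simp add: value_factor_def)
qed

lemma portfolio_return_pos:
  assumes "a \<in> {0..1}" and "0 < R k \<omega>"
  shows "0 < portfolio_return a k \<omega>"
  using assms Rf_pos
  by (cases "a = 0") (auto intro: add_pos_nonneg add_nonneg_pos)

lemma portfolio_return_measurable:
  assumes "k \<in> {1..T}"
  shows "(\<lambda>\<omega>. w * portfolio_return a k \<omega>) \<in> borel_measurable M"
  using R_measurable[OF assms] by measurable

lemma abs_portfolio_return_le:
  assumes "a \<in> {0..1}"
  shows "\<bar>portfolio_return a k \<omega>\<bar> \<le> \<bar>R k \<omega>\<bar> + Rf"
proof -
  have "\<bar>portfolio_return a k \<omega>\<bar> \<le> a * \<bar>R k \<omega>\<bar> + (1 - a) * Rf"
    using abs_triangle_ineq[of "a * R k \<omega>" "(1 - a) * Rf"] assms Rf_pos by (simp add: abs_mult)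
  also have "\<dots> \<le> \<bar>R k \<omega>\<bar> + Rf"
    using assms Rf_pos by (intro add_mono mult_left_le_one_le) auto
  finally show ?thesis .
qed

lemma quantile_mono_comp:
  fixes f :: "real \<Rightarrow> real"
  assumes "mono f" and "X \<in> borel_measurable M" "Y \<in> borel_measurable M"
    and "AE \<omega> in M. X \<omega> \<le> Y \<omega>"
  shows "quantile M \<tau> (\<lambda>\<omega>. \<beta> * f (X \<omega>)) \<le> quantile M \<tau> (\<lambda>\<omega>. \<beta> * f (Y \<omega>))"
proof (rule quantile_mono_AE[OF _ _ tau_bounds])
  have "f \<in> borel_measurable borel"
    using assms(1) by (rule borel_measurable_mono)
  then show "(\<lambda>\<omega>. \<beta> * f (X \<omega>)) \<in> borel_measurable M" "(\<lambda>\<omega>. \<beta> * f (Y \<omega>)) \<in> borel_measurable M"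
    using assms(2,3) by measurable
  show "AE \<omega> in M. \<beta> * f (X \<omega>) \<le> \<beta> * f (Y \<omega>)"
    using assms(4) by eventually_elim (use assms(1) beta_pos in \<open>auto simp: mono_def\<close>)
qed

lemma mono_value_fn: "n \<le> T \<Longrightarrow> mono (value_fn n)"
proof (induction n)
  case 0
  then show ?case
    by (simp add: mono_def)
next
  case (Suc n)
  define k where "k = T - n"
  have k: "k \<in> {1..T}"
    using Suc.prems k_def by auto
  have mono: "mono (value_fn n)"
    using Suc by simp
  have R_k: "R k \<in> borel_measurable M"
    using R_measurable[OF k] .
  define obj where "obj w a = quantile M \<tau> (\<lambda>\<omega>. \<beta> * value_fn n (w * portfolio_return a k \<omega>))"
    for w a
  have obj_le_bound: "obj w a \<le> quantile M \<tau> (\<lambda>\<omega>. \<beta> * value_fn n (\<bar>w\<bar> * (\<bar>R k \<omega>\<bar> + Rf)))"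
    if a: "a \<in> {0..1}" for w a
    unfolding obj_def
  proof (rule quantile_mono_comp[OF mono])
    show "AE \<omega> in M. w * portfolio_return a k \<omega> \<le> \<bar>w\<bar> * (\<bar>R k \<omega>\<bar> + Rf)"
    proof (rule AE_I2)
      fix \<omega>
      have "w * portfolio_return a k \<omega> \<le> \<bar>w\<bar> * \<bar>portfolio_return a k \<omega>\<bar>"
        by (metis abs_ge_self abs_mult)
      also have "\<dots> \<le> \<bar>w\<bar> * (\<bar>R k \<omega>\<bar> + Rf)"
        using abs_portfolio_return_le[OF a] by (simp add: mult_left_mono)
      finally show "w * portfolio_return a k \<omega> \<le> \<bar>w\<bar> * (\<bar>R k \<omega>\<bar> + Rf)" .
    qed
    show "(\<lambda>\<omega>. \<bar>w\<bar> * (\<bar>R k \<omega>\<bar> + Rf)) \<in> borel_measurable M"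
      using R_k by measurable
  qed (rule portfolio_return_measurable[OF k])
  have obj_mono: "obj w1 a \<le> obj w2 a" if "w1 \<le> w2" and a: "a \<in> {0..1}" for w1 w2 a
    unfolding obj_def
  proof (rule quantile_mono_comp[OF mono])
    show "AE \<omega> in M. w1 * portfolio_return a k \<omega> \<le> w2 * portfolio_return a k \<omega>"
      using R_pos_AE[OF k]
      by eventually_elim (use that portfolio_return_pos[OF a] in \<open>simp add: mult_right_mono\<close>)
  qed (rule portfolio_return_measurable[OF k])+
  have value_eq: "value_fn (Suc n) w = (SUP a\<in>{0..1}. obj w a)" for w
    by (simp add: obj_def k_def)
  show ?case
  proof (rule monoI)
    fix w1 w2 :: real
    assume "w1 \<le> w2"
    show "value_fn (Suc n) w1 \<le> value_fn (Suc n) w2"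
      unfolding value_eq
    proof (rule cSUP_mono)
      show "bdd_above (obj w2 ` {0..1})"
        by (rule bdd_aboveI2) (rule obj_le_bound)
    qed (use obj_mono \<open>w1 \<le> w2\<close> in force)+
  qed
qed

lemma value_fn_measurable: "n \<le> T \<Longrightarrow> value_fn n \<in> borel_measurable borel"
  using mono_value_fn by (rule borel_measurable_mono)

lemma stage_quantile_linear:
  assumes k: "k \<in> {1..T}" and f: "f \<in> borel_measurable borel"
    and f_linear: "\<And>x. 0 < x \<Longrightarrow> f x = C * x" and C: "0 \<le> C"
    and w: "0 < w" and a: "a \<in> {0..1}"
  shows "quantile M \<tau> (\<lambda>\<omega>. \<beta> * f (w * portfolio_return a k \<omega>))
    = \<beta> * C * w * (a * quantile M \<tau> (R k) + (1 - a) * Rf)"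
proof -
  have R_k: "R k \<in> borel_measurable M"
    using R_measurable[OF k] .
  have "quantile M \<tau> (\<lambda>\<omega>. \<beta> * f (w * portfolio_return a k \<omega>))
      = quantile M \<tau> (\<lambda>\<omega>. (\<beta> * C * w * a) * R k \<omega> + \<beta> * C * w * (1 - a) * Rf)"
  proof (rule quantile_cong_AE[OF _ _ tau_bounds])
    show "AE \<omega> in M. \<beta> * f (w * portfolio_return a k \<omega>)
        = (\<beta> * C * w * a) * R k \<omega> + \<beta> * C * w * (1 - a) * Rf"
      using R_pos_AE[OF k]
    proof eventually_elim
      case (elim \<omega>)
      then have "0 < w * portfolio_return a k \<omega>"
        using w portfolio_return_pos[OF a] by simp
      then show ?case
        by (simp add: f_linear algebra_simps)
    qed
    show "(\<lambda>\<omega>. \<beta> * f (w * portfolio_return a k \<omega>)) \<in> borel_measurable M"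
      using measurable_compose[OF portfolio_return_measurable[OF k] f] by simp
    show "(\<lambda>\<omega>. (\<beta> * C * w * a) * R k \<omega> + \<beta> * C * w * (1 - a) * Rf) \<in> borel_measurable M"
      using R_k by simp
  qed
  also have "\<dots> = \<beta> * C * w * a * quantile M \<tau> (R k) + \<beta> * C * w * (1 - a) * Rf"
    using a beta_pos C w by (intro quantile_affine[OF R_k tau_bounds]) simp
  finally show ?thesis
    by (simp add: algebra_simps)
qed

lemma value_fn_linear: "n \<le> T \<Longrightarrow> 0 < x \<Longrightarrow> value_fn n x = value_factor n * x"
proof (induction n arbitrary: x)
  case 0
  then show ?case
    by (simp add: value_factor_def)
next
  case (Suc n)
  let ?K = "\<beta> * value_factor n * x"
  have n: "n < T"
    using Suc.prems by simp
  have "value_fn (Suc n) x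
      = (SUP a\<in>{0..1}. quantile M \<tau> (\<lambda>\<omega>. \<beta> * value_fn n (x * portfolio_return a (T - n) \<omega>)))"
    by simp
  also have "\<dots> = (SUP a\<in>{0..1}. ?K * (a * quantile M \<tau> (R (T - n)) + (1 - a) * Rf))"
  proof (rule SUP_cong[OF refl])
    fix a :: real assume "a \<in> {0..1}"
    then show "quantile M \<tau> (\<lambda>\<omega>. \<beta> * value_fn n (x * portfolio_return a (T - n) \<omega>))
        = ?K * (a * quantile M \<tau> (R (T - n)) + (1 - a) * Rf)"
      using n Suc.IH value_factor_pos[of n] Suc.prems
      by (intro stage_quantile_linear value_fn_measurable) (simp_all add: less_imp_le)
  qed
  also have "\<dots> = ?K * growth (T - n)"
    using beta_pos value_factor_pos[of n] Suc.prems by (intro SUP_convex_combination) simp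
  also have "\<dots> = value_factor (Suc n) * x"
    using value_factor_Suc[OF n] by simp
  finally show ?case .
qed

lemma vstar_closed_form:
  assumes "t \<le> T" and "0 < w"
  shows "vstar M R Rf \<beta> \<tau> T t w = \<beta> ^ (T - t) * w * (\<Prod>k\<in>{t + 1..T}. growth k)"
  using value_fn_linear[of "T - t" w] assms by (simp add: vstar_def value_factor_def)

lemma vstar_eq_SUP_stage_obj:
  assumes "t < T"
  shows "vstar M R Rf \<beta> \<tau> T t w = (SUP a\<in>{0..1}. stage_obj M R Rf \<beta> \<tau> T t w a)"
proof -
  have "T - t = Suc (T - Suc t)" and "T - (T - Suc t) = Suc t"
    using assms by auto
  then show ?thesis
    by (simp add: vstar_def stage_obj_def)
qed

lemma stage_obj_eq:
  assumes "t < T" and "0 < w" and "a \<in> {0..1}"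
  shows "stage_obj M R Rf \<beta> \<tau> T t w a
    = \<beta> * value_factor (T - Suc t) * w * (a * quantile M \<tau> (R (Suc t)) + (1 - a) * Rf)"
  unfolding stage_obj_def vstar_def
proof (rule stage_quantile_linear[OF _ value_fn_measurable])
  show "value_fn (T - Suc t) x = value_factor (T - Suc t) * x" if "0 < x" for x
    using value_fn_linear that by simp
qed (use assms value_factor_pos less_imp_le in auto)

end

theorem mainTheorem4:
  fixes M :: "'a measure" and R :: "nat \<Rightarrow> 'a \<Rightarrow> real"
    and T :: nat and \<tau> \<beta> Rf :: real
  assumes "prob_space M"
    and "T \<ge> 1"
    and "0 < \<tau>" "\<tau> < 1"
    and "0 < \<beta>" "\<beta> < 1"
    and "0 < Rf"
    and "\<And>k. k \<in> {1..T} \<Longrightarrow> R k \<in> borel_measurable M"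
    and "prob_space.indep_vars M (\<lambda>_. borel) R {1..T}"
    and "\<And>k. k \<in> {1..T} \<Longrightarrow> (AE \<omega> in M. R k \<omega> > 0)"
  shows "\<forall>t<T. \<forall>w>0.
      vstar M R Rf \<beta> \<tau> T t w
        = \<beta> ^ (T - t) * w * (\<Prod>k\<in>{t+1..T}. max (quantile M \<tau> (R k)) Rf)
    \<and> (\<forall>a\<in>{0..1}.
         (stage_obj M R Rf \<beta> \<tau> T t w a = vstar M R Rf \<beta> \<tau> T t w)
         \<longleftrightarrow> ((quantile M \<tau> (R (t+1)) > Rf \<longrightarrow> a = 1)
              \<and> (quantile M \<tau> (R (t+1)) < Rf \<longrightarrow> a = 0)))"
proof (intro allI impI)
  \<comment> \<open>Independence is what justifies the unconditional quantiles in the definition of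
    \<open>vstar_aux\<close>.\<close>
  interpret quantile_portfolio M R Rf \<beta> \<tau> T
    using assms by (simp add: quantile_portfolio_def quantile_portfolio_axioms_def)
  fix t :: nat and w :: real
  assume t: "t < T" and w: "0 < w"
  define K where "K = \<beta> * value_factor (T - Suc t) * w"
  have K: "0 < K"
    using beta_pos value_factor_pos w by (simp add: K_def)
  have obj: "stage_obj M R Rf \<beta> \<tau> T t w a = K * (a * quantile M \<tau> (R (t + 1)) + (1 - a) * Rf)"
    if "a \<in> {0..1}" for a
    using stage_obj_eq[OF t w that] by (simp add: K_def)
  have "vstar M R Rf \<beta> \<tau> T t w = K * growth (t + 1)"
    using vstar_eq_SUP_stage_obj[OF t] SUP_convex_combination[of K] K obj by simp
  then show "vstar M R Rf \<beta> \<tau> T t w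
        = \<beta> ^ (T - t) * w * (\<Prod>k\<in>{t+1..T}. max (quantile M \<tau> (R k)) Rf)
    \<and> (\<forall>a\<in>{0..1}.
         (stage_obj M R Rf \<beta> \<tau> T t w a = vstar M R Rf \<beta> \<tau> T t w)
         \<longleftrightarrow> ((quantile M \<tau> (R (t+1)) > Rf \<longrightarrow> a = 1)
              \<and> (quantile M \<tau> (R (t+1)) < Rf \<longrightarrow> a = 0)))"
    using vstar_closed_form[of t w] t w obj K convex_combination_eq_max_iff by auto
qed

end
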